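(* Let $A=[x_0,x_1]$ and $B=[y_0,y_1]$ be closed real intervals. There is an algorithm which enumerates all solutions to the one-dimensional grid problem for $A$ and $B$, i.e., all $u\in\mathbb Z[\sqrt2]$ with $u\in A$ and $u^\bullet\in B$. Moreover, the algorithm only requires a constant number of arithmetic operations per solution produced.
   Context: $\mathbb Z[\sqrt2]=\{a+b\sqrt2 : a,b\in\mathbb Z\}\subseteq\mathbb R$, and for $u=a+b\sqrt2$ its conjugate is $u^\bullet=a-b\sqrt2$. Arithmetic operations are addition, subtraction, multiplication, division, exponentiation and logarithm. *)

theory Defs
  imports Complex_Main
begin

definition zsqrt2 :: "real set" where
  "zsqrt2 = {of_int a + of_int b * sqrt 2 | a b. True}"

definition rt2_conj :: "int \<times> int \<Rightarrow> real" where
  "rt2_conj p = of_int (fst p) - of_int (snd p) * sqrt 2"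

definition rt2_val :: "int \<times> int \<Rightarrow> real" where
  "rt2_val p = of_int (fst p) + of_int (snd p) * sqrt 2"

text \<open>Solutions of the 1D grid problem for A = [x0,x1], B = [y0,y1]:
  u = a + b sqrt 2 with u in A and its conjugate in B, represented by the integer
  coordinate pair (a,b) (unique since sqrt 2 is irrational).\<close>

definition grid_solutions :: "real \<Rightarrow> real \<Rightarrow> real \<Rightarrow> real \<Rightarrow> (int \<times> int) set" where
  "grid_solutions x0 x1 y0 y1 =
     {p. x0 \<le> rt2_val p \<and> rt2_val p \<le> x1 \<and> y0 \<le> rt2_conj p \<and> rt2_conj p \<le> y1}"

text \<open>Every executed instruction costs one step.\<close>

datatype instr =
    LoadConst nat int
  | Copy nat nat
  | Add nat nat nat
  | Sub nat nat nat
  | Mul nat nat nat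
  | Dvd nat nat nat
  | Pow nat nat nat
  | Log nat nat nat
  | Floor nat nat
  | JumpLe nat nat nat
  | Jump nat
  | Output nat nat
  | Halt

type_synonym mstate = "nat \<times> (nat \<Rightarrow> real) \<times> (real \<times> real) list"

definition halted :: "instr list \<Rightarrow> mstate \<Rightarrow> bool" where
  "halted P s = (fst s \<ge> length P \<or> P ! fst s = Halt)"

fun exec_instr :: "instr \<Rightarrow> mstate \<Rightarrow> mstate" where
  "exec_instr (LoadConst d c) (pc, r, out) = (Suc pc, r(d := of_int c), out)"
| "exec_instr (Copy d i) (pc, r, out) = (Suc pc, r(d := r i), out)"
| "exec_instr (Add d i j) (pc, r, out) = (Suc pc, r(d := r i + r j), out)"
| "exec_instr (Sub d i j) (pc, r, out) = (Suc pc, r(d := r i - r j), out)"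
| "exec_instr (Mul d i j) (pc, r, out) = (Suc pc, r(d := r i * r j), out)"
| "exec_instr (Dvd d i j) (pc, r, out) = (Suc pc, r(d := r i / r j), out)"
| "exec_instr (Pow d i j) (pc, r, out) = (Suc pc, r(d := r i powr r j), out)"
| "exec_instr (Log d i j) (pc, r, out) = (Suc pc, r(d := log (r i) (r j)), out)"
| "exec_instr (Floor d i) (pc, r, out) = (Suc pc, r(d := of_int \<lfloor>r i\<rfloor>), out)"
| "exec_instr (JumpLe i j t) (pc, r, out) = ((if r i \<le> r j then t else Suc pc), r, out)"
| "exec_instr (Jump t) (pc, r, out) = (t, r, out)"
| "exec_instr (Output i j) (pc, r, out) = (Suc pc, r, out @ [(r i, r j)])"
| "exec_instr Halt s = s"

definition step :: "instr list \<Rightarrow> mstate \<Rightarrow> mstate" where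
  "step P s = (if halted P s then s else exec_instr (P ! fst s) s)"

definition run :: "instr list \<Rightarrow> nat \<Rightarrow> mstate \<Rightarrow> mstate" where
  "run P n = (step P ^^ n)"

definition init_state :: "real \<Rightarrow> real \<Rightarrow> real \<Rightarrow> real \<Rightarrow> mstate" where
  "init_state x0 x1 y0 y1 =
     (0, (\<lambda>_. 0)(0 := x0, 1 := x1, 2 := y0, 3 := y1), [])"

end

theory Submission
  imports Defs
begin

(* The unit mu = (1 + sqrt 2)^2 of Z[sqrt 2] has conjugate 1/mu, so for m = mu^k there is a u
   with u = 1/m and u\<bullet> = m, and v \<mapsto> u v maps the solutions of the grid problem for
   (m A, B/m) bijectively onto those for (A, B).  For k = floor (log_mu ((|B| + 1/(|A| + 1)) / 2))
   we get |B|/m < 12, and |m A| < 1 whenever |B|/m < 1.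

   For the rescaled intervals [X0, X1] and [Y0, Y1], subtracting the two constraints on a solution
   a + b sqrt 2 confines b to X0 - Y1 \<le> 2 b sqrt 2 \<le> X1 - Y0, and for fixed b the admissible a
   form an integer interval; the program scans these rows and outputs u (a + b sqrt 2) for each
   solution.  A row with 2 b sqrt 2 farther than 12 from both ends of its range contains the
   solution with a = ceil (Y0 + b sqrt 2) once Y1 - Y0 \<ge> 1, and otherwise those rows lie in a
   window of length < 1.  So at most 15 rows are empty, and the number of steps is linear in the
   number of solutions plus one. *)

section \<open>Multiplication in Z[sqrt 2]\<close>

definition rt2_mult :: "int \<times> int \<Rightarrow> int \<times> int \<Rightarrow> int \<times> int" where
  "rt2_mult u v = (fst u * fst v + 2 * snd u * snd v, snd u * fst v + fst u * snd v)"

lemma rt2_val_mult: "rt2_val (rt2_mult u v) = rt2_val u * rt2_val v"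
  by (simp add: rt2_val_def rt2_mult_def algebra_simps)

lemma rt2_conj_mult: "rt2_conj (rt2_mult u v) = rt2_conj u * rt2_conj v"
  by (simp add: rt2_conj_def rt2_mult_def algebra_simps)

lemma rt2_val_times_conj: "rt2_val u * rt2_conj u = of_int (fst u ^ 2 - 2 * snd u ^ 2)"
  by (simp add: rt2_val_def rt2_conj_def algebra_simps power2_eq_square)

lemma rt2_mult_conj_cancel:
  assumes "rt2_val u * rt2_conj u = 1"
  shows "rt2_mult u (rt2_mult (fst u, - snd u) v) = v"
proof -
  have "fst u ^ 2 - 2 * snd u ^ 2 = 1"
    using assms unfolding rt2_val_times_conj by linarith
  then have "(fst u ^ 2 - 2 * snd u ^ 2) * fst v = fst v" "(fst u ^ 2 - 2 * snd u ^ 2) * snd v = snd v"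
    by simp_all
  then show ?thesis
    by (simp add: rt2_mult_def algebra_simps power2_eq_square prod_eq_iff)
qed

lemma inj_rt2_mult:
  assumes "rt2_val u * rt2_conj u = 1"
  shows "inj (rt2_mult u)"
proof (rule inj_on_inverseI)
  have "rt2_val (fst u, - snd u) * rt2_conj (fst u, - snd u) = 1"
    using assms by (simp add: rt2_val_def rt2_conj_def mult.commute)
  from rt2_mult_conj_cancel[OF this] show "rt2_mult (fst u, - snd u) (rt2_mult u v) = v" for v
    by simp
qed

lemma grid_solutions_rescale:
  assumes "0 < m" "rt2_val u = 1 / m" "rt2_conj u = m"
  shows "grid_solutions x0 x1 y0 y1 = rt2_mult u ` grid_solutions (m * x0) (m * x1) (y0 / m) (y1 / m)"
proof -
  have mem: "rt2_mult u v \<in> grid_solutions x0 x1 y0 y1 \<longleftrightarrow>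
      v \<in> grid_solutions (m * x0) (m * x1) (y0 / m) (y1 / m)" for v
    using assms(1) by (simp add: grid_solutions_def rt2_val_mult rt2_conj_mult assms(2,3) field_simps)
  show ?thesis
  proof (intro set_eqI iffI)
    fix z assume "z \<in> grid_solutions x0 x1 y0 y1"
    moreover have "z = rt2_mult u (rt2_mult (fst u, - snd u) z)"
      using assms by (simp add: rt2_mult_conj_cancel)
    ultimately show "z \<in> rt2_mult u ` grid_solutions (m * x0) (m * x1) (y0 / m) (y1 / m)"
      using mem by (metis image_eqI)
  next
    fix z assume "z \<in> rt2_mult u ` grid_solutions (m * x0) (m * x1) (y0 / m) (y1 / m)"
    then show "z \<in> grid_solutions x0 x1 y0 y1"
      using mem by blast
  qed
qed

definition unscaled_coords :: "real \<Rightarrow> int \<times> int \<Rightarrow> real \<times> real" where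
  "unscaled_coords m v =
     (let x = rt2_val v / m; y = m * rt2_conj v in ((x + y) / 2, (x - y) / (2 * sqrt 2)))"

lemma unscaled_coords_rt2_mult:
  assumes "rt2_val u = 1 / m" "rt2_conj u = m"
  shows "unscaled_coords m v = (\<lambda>(a, b). (real_of_int a, real_of_int b)) (rt2_mult u v)"
proof -
  have "rt2_val v / m = rt2_val (rt2_mult u v)" "m * rt2_conj v = rt2_conj (rt2_mult u v)"
    using assms by (simp_all add: rt2_val_mult rt2_conj_mult)
  then show ?thesis
    unfolding unscaled_coords_def Let_def
    by (simp add: rt2_val_def rt2_conj_def split_def)
qed

section \<open>Rescaling by powers of the unit mu\<close>

definition mu :: real where
  "mu = 3 + 2 * sqrt 2"

lemma mu_gt_1: "1 < mu"
proof -
  have "0 < sqrt 2"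
    by simp
  then show ?thesis
    unfolding mu_def by linarith
qed

lemma mu_less_6: "mu < 6"
proof -
  have "sqrt 2 < 3 / 2"
    by (rule real_less_lsqrt) (auto simp: power2_eq_square)
  then show ?thesis
    by (simp add: mu_def)
qed

lemma rt2_mult_power:
  "rt2_val ((rt2_mult w ^^ n) (1, 0)) = rt2_val w ^ n \<and> rt2_conj ((rt2_mult w ^^ n) (1, 0)) = rt2_conj w ^ n"
  by (induction n) (simp_all add: rt2_val_mult rt2_conj_mult, simp add: rt2_val_def rt2_conj_def)

lemma mu_powr_int_rt2:
  "\<exists>u. rt2_val u = mu powr of_int k \<and> rt2_conj u = mu powr of_int (- k)"
proof -
  have mu_pos: "0 < mu" and val: "rt2_val (3, 2) = mu" and conj: "rt2_conj (3, 2) = inverse mu"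
    using mu_gt_1 by (simp_all add: mu_def rt2_val_def rt2_conj_def field_simps)
  have powr_int: "mu powr of_int (int n) = mu ^ n" "mu powr of_int (- int n) = inverse mu ^ n" for n
    using mu_pos by (simp_all add: powr_minus powr_realpow power_inverse)
  show ?thesis
  proof (cases "0 \<le> k")
    case True
    then obtain n where "k = int n"
      using nonneg_eq_int by blast
    then show ?thesis
      using rt2_mult_power[where w = "(3, 2)" and n = n] val conj powr_int by metis
  next
    case False
    then obtain n where "k = - int n"
      by (intro that[of "nat (- k)"]) simp
    moreover have "rt2_val (3, -2) = rt2_conj (3, 2)" "rt2_conj (3, -2) = rt2_val (3, 2)"
      by (simp_all add: rt2_val_def rt2_conj_def)
    ultimately show ?thesis
      using rt2_mult_power[where w = "(3, -2)" and n = n] val conj powr_int by (metis minus_minus)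
  qed
qed

definition scale_factor :: "real \<Rightarrow> real \<Rightarrow> real \<Rightarrow> real \<Rightarrow> real" where
  "scale_factor x0 x1 y0 y1 = mu powr of_int \<lfloor>log mu ((y1 - y0 + 1 / (x1 - x0 + 1)) / 2)\<rfloor>"

lemma scale_factor_unit:
  "\<exists>u. rt2_val u = 1 / scale_factor x0 x1 y0 y1 \<and> rt2_conj u = scale_factor x0 x1 y0 y1"
proof -
  define k where "k = \<lfloor>log mu ((y1 - y0 + 1 / (x1 - x0 + 1)) / 2)\<rfloor>"
  obtain u where "rt2_val u = mu powr of_int (- k)" "rt2_conj u = mu powr of_int (- (- k))"
    using mu_powr_int_rt2[of "- k"] by blast
  then show ?thesis
    unfolding scale_factor_def k_def[symmetric] by (intro exI[of _ u]) (simp add: powr_minus divide_inverse)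
qed

lemma scale_factor_pos: "0 < scale_factor x0 x1 y0 y1"
  unfolding scale_factor_def using mu_gt_1 by simp

lemma scale_factor_bounds:
  assumes "x0 \<le> x1" "y0 \<le> y1"
  defines "m \<equiv> scale_factor x0 x1 y0 y1"
  shows "(y1 - y0) / m < 12" "(y1 - y0) / m < 1 \<Longrightarrow> m * (x1 - x0) < 1"
proof -
  have "0 < m"
    unfolding m_def by (rule scale_factor_pos)
  define e where "e = 1 / (x1 - x0 + 1)"
  define t where "t = (y1 - y0 + e) / 2"
  have "0 < e"
    using assms(1) unfolding e_def by simp
  then have "0 < t"
    using assms(2) unfolding t_def by simp
  have "m = mu powr of_int \<lfloor>log mu t\<rfloor>"
    unfolding m_def scale_factor_def e_def t_def ..
  then have "m \<le> t" "t < m * mu"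
    using floor_log_eq_powr_iff[THEN iffD1, OF \<open>0 < t\<close> mu_gt_1 refl] mu_gt_1
    by (simp_all add: powr_add)
  have "y1 - y0 < 2 * (m * mu)"
    using \<open>t < m * mu\<close> \<open>0 < e\<close> unfolding t_def by simp
  also have "\<dots> \<le> 2 * (m * 6)"
    using mu_less_6 \<open>0 < m\<close> by simp
  finally show "(y1 - y0) / m < 12"
    using \<open>0 < m\<close> by (simp add: divide_less_eq)
  assume "(y1 - y0) / m < 1"
  then have "t < e"
    using \<open>m \<le> t\<close> \<open>0 < m\<close> unfolding t_def by (simp add: divide_less_eq)
  then have "m * (x1 - x0) \<le> e * (x1 - x0)"
    using \<open>m \<le> t\<close> assms(1) by (intro mult_right_mono) auto
  also have "\<dots> < 1"
    unfolding e_def using assms(1) by (simp add: divide_less_eq)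
  finally show "m * (x1 - x0) < 1" .
qed

section \<open>Enumerating the solutions row by row\<close>

definition grid_row_lo :: "real \<Rightarrow> real \<Rightarrow> int \<Rightarrow> int" where
  "grid_row_lo X0 Y0 b = max \<lceil>X0 - of_int b * sqrt 2\<rceil> \<lceil>Y0 + of_int b * sqrt 2\<rceil>"

definition grid_row_hi :: "real \<Rightarrow> real \<Rightarrow> int \<Rightarrow> int" where
  "grid_row_hi X1 Y1 b = min \<lfloor>X1 - of_int b * sqrt 2\<rfloor> \<lfloor>Y1 + of_int b * sqrt 2\<rfloor>"

definition grid_row :: "real \<Rightarrow> real \<Rightarrow> real \<Rightarrow> real \<Rightarrow> int \<Rightarrow> (int \<times> int) list" where
  "grid_row X0 X1 Y0 Y1 b = map (\<lambda>a. (a, b)) [grid_row_lo X0 Y0 b..grid_row_hi X1 Y1 b]"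

definition grid_rows :: "real \<Rightarrow> real \<Rightarrow> real \<Rightarrow> real \<Rightarrow> int list" where
  "grid_rows X0 X1 Y0 Y1 = [\<lceil>(X0 - Y1) / (2 * sqrt 2)\<rceil>..\<lfloor>(X1 - Y0) / (2 * sqrt 2)\<rfloor>]"

definition grid_list :: "real \<Rightarrow> real \<Rightarrow> real \<Rightarrow> real \<Rightarrow> (int \<times> int) list" where
  "grid_list X0 X1 Y0 Y1 = concat (map (grid_row X0 X1 Y0 Y1) (grid_rows X0 X1 Y0 Y1))"

lemma grid_solutions_iff_row_bounds:
  "(a, b) \<in> grid_solutions X0 X1 Y0 Y1 \<longleftrightarrow> grid_row_lo X0 Y0 b \<le> a \<and> a \<le> grid_row_hi X1 Y1 b"
  unfolding grid_solutions_def grid_row_lo_def grid_row_hi_def rt2_val_def rt2_conj_def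
  by (auto simp: ceiling_le_iff le_floor_iff algebra_simps)

lemma grid_solutions_in_rows:
  assumes "(a, b) \<in> grid_solutions X0 X1 Y0 Y1"
  shows "b \<in> set (grid_rows X0 X1 Y0 Y1)"
proof -
  have "X0 - Y1 \<le> 2 * (of_int b * sqrt 2)" "2 * (of_int b * sqrt 2) \<le> X1 - Y0"
    using assms unfolding grid_solutions_def rt2_val_def rt2_conj_def by auto
  then have "X0 - Y1 \<le> 2 * sqrt 2 * of_int b" "2 * sqrt 2 * of_int b \<le> X1 - Y0"
    by (simp_all only: ac_simps)
  then show ?thesis
    unfolding grid_rows_def
    by (simp add: ceiling_le_iff le_floor_iff pos_divide_le_eq pos_le_divide_eq mult.commute)
qed

lemma set_grid_list: "set (grid_list X0 X1 Y0 Y1) = grid_solutions X0 X1 Y0 Y1"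
  unfolding grid_list_def grid_row_def
  using grid_solutions_in_rows grid_solutions_iff_row_bounds by fastforce

lemma distinct_concat_map_pairs:
  "distinct bs \<Longrightarrow> (\<And>b. distinct (F b)) \<Longrightarrow> distinct (concat (map (\<lambda>b. map (\<lambda>a. (a, b)) (F b)) bs))"
  by (induction bs) (auto simp: distinct_map inj_on_def)

lemma distinct_grid_list: "distinct (grid_list X0 X1 Y0 Y1)"
  unfolding grid_list_def grid_row_def grid_rows_def by (rule distinct_concat_map_pairs) simp_all

definition int_multiples :: "real \<Rightarrow> real \<Rightarrow> real \<Rightarrow> int set" where
  "int_multiples c l w = {b. l \<le> c * of_int b \<and> c * of_int b \<le> l + w}"

lemma int_multiples_subset:
  assumes "0 < c"
  shows "int_multiples c l w \<subseteq> {\<lceil>l / c\<rceil>..\<lfloor>(l + w) / c\<rfloor>}"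
  using assms by (auto simp: int_multiples_def ceiling_le_iff le_floor_iff field_simps)

lemma finite_int_multiples: "0 < c \<Longrightarrow> finite (int_multiples c l w)"
  by (rule finite_subset[OF int_multiples_subset]) simp_all

lemma card_int_multiples_le:
  assumes "0 < c" "0 \<le> w"
  shows "real (card (int_multiples c l w)) \<le> w / c + 1"
proof -
  let ?i = "\<lceil>l / c\<rceil>" and ?j = "\<lfloor>(l + w) / c\<rfloor>"
  have "card (int_multiples c l w) \<le> nat (?j - ?i + 1)"
    using card_mono[OF _ int_multiples_subset[OF assms(1)]] by simp
  moreover have "real_of_int (?j - ?i + 1) \<le> (l + w) / c - l / c + 1"
    by linarith
  moreover have "(l + w) / c - l / c = w / c"
    by (simp add: diff_divide_distrib[symmetric])
  moreover have "0 \<le> w / c"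
    using assms by simp
  ultimately show ?thesis
    by linarith
qed

lemma grid_row_has_solution:
  assumes "1 \<le> Y1 - Y0" "X0 - Y0 \<le> 2 * sqrt 2 * of_int b" "2 * sqrt 2 * of_int b \<le> X1 - Y1"
  shows "(\<lceil>Y0 + of_int b * sqrt 2\<rceil>, b) \<in> grid_solutions X0 X1 Y0 Y1"
proof -
  define a where "a = \<lceil>Y0 + of_int b * sqrt 2\<rceil>"
  have "Y0 + of_int b * sqrt 2 \<le> of_int a" "of_int a < Y0 + of_int b * sqrt 2 + 1"
    unfolding a_def by linarith+
  moreover have "2 * sqrt 2 * of_int b = 2 * (of_int b * sqrt 2)"
    by simp
  ultimately have "X0 \<le> of_int a + of_int b * sqrt 2" "of_int a + of_int b * sqrt 2 \<le> X1"
    "Y0 \<le> of_int a - of_int b * sqrt 2" "of_int a - of_int b * sqrt 2 \<le> Y1"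
    using assms by linarith+
  then show ?thesis
    unfolding grid_solutions_def rt2_val_def rt2_conj_def a_def by simp
qed

lemma grid_rows_covered:
  assumes "0 \<le> Y1 - Y0" "Y1 - Y0 < 12" "Y1 - Y0 < 1 \<Longrightarrow> X1 - X0 < 1"
  defines "c \<equiv> 2 * sqrt 2"
  shows "set (grid_rows X0 X1 Y0 Y1) \<subseteq> snd ` grid_solutions X0 X1 Y0 Y1
    \<union> int_multiples c (X0 - Y1) 12 \<union> int_multiples c (X1 - Y0 - 12) 12 \<union> int_multiples c (X0 - Y0) 1"
proof
  fix b assume "b \<in> set (grid_rows X0 X1 Y0 Y1)"
  then have "(X0 - Y1) / c \<le> of_int b" "of_int b \<le> (X1 - Y0) / c"
    unfolding grid_rows_def c_def by (auto simp: ceiling_le_iff le_floor_iff)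
  then have lower: "X0 - Y1 \<le> c * of_int b" and upper: "c * of_int b \<le> X1 - Y0"
    unfolding c_def by (simp_all add: pos_divide_le_eq pos_le_divide_eq mult.commute)
  show "b \<in> snd ` grid_solutions X0 X1 Y0 Y1 \<union> int_multiples c (X0 - Y1) 12
    \<union> int_multiples c (X1 - Y0 - 12) 12 \<union> int_multiples c (X0 - Y0) 1"
  proof (rule ccontr)
    assume "\<not> ?thesis"
    then have far_from_ends: "X0 - Y0 \<le> c * of_int b" "c * of_int b \<le> X1 - Y1"
      and not_near_start: "b \<notin> int_multiples c (X0 - Y0) 1"
      and no_solution: "b \<notin> snd ` grid_solutions X0 X1 Y0 Y1"
      using lower upper assms(2) by (auto simp: int_multiples_def)
    have "1 \<le> Y1 - Y0"
    proof (rule ccontr)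
      assume "\<not> 1 \<le> Y1 - Y0"
      then have "X1 - X0 < 1"
        using assms(3) by simp
      then show False
        using far_from_ends not_near_start assms(1) by (auto simp: int_multiples_def)
    qed
    then have "(\<lceil>Y0 + of_int b * sqrt 2\<rceil>, b) \<in> grid_solutions X0 X1 Y0 Y1"
      using far_from_ends unfolding c_def by (rule grid_row_has_solution)
    with no_solution show False
      by force
  qed
qed

lemma length_grid_rows_le:
  assumes "0 \<le> Y1 - Y0" "Y1 - Y0 < 12" "Y1 - Y0 < 1 \<Longrightarrow> X1 - X0 < 1"
  shows "length (grid_rows X0 X1 Y0 Y1) \<le> length (grid_list X0 X1 Y0 Y1) + 15"
proof -
  define c where "c = 2 * sqrt 2"
  let ?S = "snd ` grid_solutions X0 X1 Y0 Y1"
  let ?E1 = "int_multiples c (X0 - Y1) 12" and ?E2 = "int_multiples c (X1 - Y0 - 12) 12"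
    and ?E3 = "int_multiples c (X0 - Y0) 1"
  have "2 \<le> c"
    unfolding c_def by simp
  then have "12 / c \<le> 6" "1 / c < 1"
    by (simp_all add: divide_le_eq)
  have short_strips: "card (int_multiples c l 12) \<le> 7" "card (int_multiples c l 1) \<le> 1" for l
  proof -
    have "real (card (int_multiples c l 12)) \<le> 7" "real (card (int_multiples c l 1)) < 2"
      using card_int_multiples_le[of c 12 l] card_int_multiples_le[of c 1 l] \<open>2 \<le> c\<close>
        \<open>12 / c \<le> 6\<close> \<open>1 / c < 1\<close> by linarith+
    then show "card (int_multiples c l 12) \<le> 7" "card (int_multiples c l 1) \<le> 1"
      by simp_all
  qed
  have "card ?S \<le> length (grid_list X0 X1 Y0 Y1)"
    using card_image_le[OF finite_set[of "grid_list X0 X1 Y0 Y1"], of snd]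
      distinct_card[OF distinct_grid_list]
    by (simp add: set_grid_list)
  have "length (grid_rows X0 X1 Y0 Y1) = card (set (grid_rows X0 X1 Y0 Y1))"
    unfolding grid_rows_def by simp
  also have "\<dots> \<le> card (?S \<union> ?E1 \<union> ?E2 \<union> ?E3)"
    using grid_rows_covered[OF assms] \<open>2 \<le> c\<close> unfolding c_def
    by (intro card_mono) (simp_all add: finite_int_multiples flip: set_grid_list)
  also have "\<dots> \<le> card ?S + card ?E1 + card ?E2 + card ?E3"
    using card_Un_le[of "?S \<union> ?E1 \<union> ?E2" ?E3] card_Un_le[of "?S \<union> ?E1" ?E2] card_Un_le[of ?S ?E1]
    by linarith
  finally show ?thesis
    using \<open>card ?S \<le> length (grid_list X0 X1 Y0 Y1)\<close> short_strips[of "X0 - Y1"]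
      short_strips[of "X1 - Y0 - 12"] short_strips[of "X0 - Y0"] by linarith
qed

lemma scaled_grid_output:
  assumes "m = scale_factor x0 x1 y0 y1"
  defines "out \<equiv> map (unscaled_coords m) (grid_list (m * x0) (m * x1) (y0 / m) (y1 / m))"
  shows "distinct out" "set out = (\<lambda>(a, b). (real_of_int a, real_of_int b)) ` grid_solutions x0 x1 y0 y1"
proof -
  let ?real_pair = "\<lambda>(a, b). (real_of_int a, real_of_int b)"
  obtain u where u: "rt2_val u = 1 / m" "rt2_conj u = m"
    using scale_factor_unit[of x0 x1 y0 y1] unfolding assms(1)[symmetric] by blast
  have "0 < m"
    unfolding assms(1) by (rule scale_factor_pos)
  have out: "out = map (?real_pair \<circ> rt2_mult u) (grid_list (m * x0) (m * x1) (y0 / m) (y1 / m))"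
    unfolding out_def using unscaled_coords_rt2_mult[OF u] by simp
  have "inj (?real_pair \<circ> rt2_mult u)"
    using inj_rt2_mult[of u] u \<open>0 < m\<close> by (intro inj_compose) (auto simp: inj_def)
  then show "distinct out"
    unfolding out using distinct_grid_list by (simp add: distinct_map inj_on_subset[OF _ subset_UNIV])
  show "set out = ?real_pair ` grid_solutions x0 x1 y0 y1"
    unfolding out using grid_solutions_rescale[OF \<open>0 < m\<close> u, of x0 x1 y0 y1]
    by (simp add: image_comp set_grid_list)
qed

lemma length_scaled_grid_rows_le:
  assumes "x0 \<le> x1" "y0 \<le> y1" "m = scale_factor x0 x1 y0 y1"
  shows "length (grid_rows (m * x0) (m * x1) (y0 / m) (y1 / m))
    \<le> length (grid_list (m * x0) (m * x1) (y0 / m) (y1 / m)) + 15"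
  using scale_factor_pos[of x0 x1 y0 y1] scale_factor_bounds[OF assms(1,2)] assms
  by (intro length_grid_rows_le) (simp_all flip: diff_divide_distrib right_diff_distrib)

section \<open>The enumeration program\<close>

lemma run_0: "run P 0 s = s"
  by (simp add: run_def)

lemma run_Suc: "run P (Suc n) s = run P n (step P s)"
  unfolding run_def by (simp add: funpow_Suc_right del: funpow.simps)

lemma run_numeral: "run P (numeral k) s = run P (pred_numeral k) (step P s)"
  by (simp add: numeral_eq_Suc run_Suc)

lemma run_add: "run P (m + n) s = run P n (run P m s)"
  unfolding run_def by (simp add: funpow_add add.commute[of m n])

(* Registers: 0-3 hold x0, x1, y0, y1; 4 = 1, 6 = sqrt 2 (as 2 powr 1/2), 7 = 1/2, 8 = mu,
   19 = 2 sqrt 2, 21 = 0; 13 = m, 14 = 1/m, 15-18 = m x0, m x1, y0/m, y1/m; 22 is the current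
   row b, 23 the last row, 24 = b sqrt 2, 28 the current a and 32 the last a of the row.
   Instructions 0-29 set these up, 30-31 halt after the last row, 32-56 compute the bounds of
   row b, 57-59 leave a finished row, and 60-70 output unscaled_coords m (a, b) and advance a.
   Ceilings are computed as -floor (-x), and max/min of u, v as (u + v +- ((u - v)^2) powr 1/2) / 2. *)
definition prog :: "instr list" where
  "prog = [
    LoadConst 4 1, LoadConst 5 2, Dvd 7 4 5, Pow 6 5 7, Add 19 6 6, LoadConst 8 3, Add 8 8 19,
    LoadConst 21 0, Sub 9 1 0, Sub 10 3 2, Add 11 9 4, Dvd 11 4 11, Add 11 10 11, Mul 11 11 7,
    Log 12 8 11, Floor 12 12, Pow 13 8 12, Dvd 14 4 13, Mul 15 13 0, Mul 16 13 1, Mul 17 14 2,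
    Mul 18 14 3, Sub 20 15 18, Dvd 20 20 19, Sub 20 21 20, Floor 20 20, Sub 22 21 20,
    Sub 23 16 17, Dvd 23 23 19, Floor 23 23,
    JumpLe 22 23 32, Halt,
    Mul 24 22 6, Sub 25 15 24, Sub 25 21 25, Floor 25 25, Sub 25 21 25, Add 26 17 24,
    Sub 26 21 26, Floor 26 26, Sub 26 21 26, Sub 27 25 26, Mul 27 27 27, Pow 27 27 7,
    Add 28 25 26, Add 28 28 27, Mul 28 28 7, Sub 29 16 24, Floor 29 29, Add 30 18 24, Floor 30 30,
    Sub 31 29 30, Mul 31 31 31, Pow 31 31 7, Add 32 29 30, Sub 32 32 31, Mul 32 32 7,
    JumpLe 28 32 60, Add 22 22 4, Jump 30,
    Add 33 28 24, Mul 33 14 33, Sub 34 28 24, Mul 34 13 34, Add 35 33 34, Mul 35 35 7,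
    Sub 36 33 34, Dvd 36 36 19, Output 35 36, Add 28 28 4, Jump 57]"

lemmas run_prog_simps = run_numeral run_Suc run_0 step_def halted_def prog_def

definition loop_regs :: "real \<Rightarrow> real \<Rightarrow> real \<Rightarrow> real \<Rightarrow> real \<Rightarrow> (nat \<Rightarrow> real) \<Rightarrow> bool" where
  "loop_regs m X0 X1 Y0 Y1 r \<longleftrightarrow> r 4 = 1 \<and> r 6 = sqrt 2 \<and> r 7 = 1 / 2 \<and> r 13 = m \<and> r 14 = 1 / m
     \<and> r 15 = X0 \<and> r 16 = X1 \<and> r 17 = Y0 \<and> r 18 = Y1 \<and> r 19 = 2 * sqrt 2 \<and> r 21 = 0"

lemma loop_regsD:
  assumes "loop_regs m X0 X1 Y0 Y1 r"
  shows "r 4 = 1" "r 6 = sqrt 2" "r 7 = 1 / 2" "r 13 = m" "r 14 = 1 / m" "r 15 = X0" "r 16 = X1"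
    "r 17 = Y0" "r 18 = Y1" "r 19 = 2 * sqrt 2" "r 21 = 0"
  using assms by (simp_all add: loop_regs_def)

lemma loop_regs_cong:
  "loop_regs m X0 X1 Y0 Y1 r \<Longrightarrow> \<forall>j < 22. r' j = r j \<Longrightarrow> loop_regs m X0 X1 Y0 Y1 r'"
  by (simp add: loop_regs_def)

lemma run_prelude:
  assumes "m = scale_factor x0 x1 y0 y1"
  shows "\<exists>r. run prog 30 (init_state x0 x1 y0 y1) = (30, r, [])
    \<and> loop_regs m (m * x0) (m * x1) (y0 / m) (y1 / m) r
    \<and> r 22 = of_int \<lceil>(m * x0 - y1 / m) / (2 * sqrt 2)\<rceil>
    \<and> r 23 = of_int \<lfloor>(m * x1 - y0 / m) / (2 * sqrt 2)\<rfloor>"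
  unfolding assms init_state_def loop_regs_def
  by (simp add: run_prog_simps powr_half_sqrt scale_factor_def mu_def ceiling_def)

lemma run_row_bounds:
  assumes "loop_regs m X0 X1 Y0 Y1 r" "r 22 = of_int b" "r 23 = of_int B" "b \<le> B"
  shows "\<exists>r'. run prog 26 (30, r, out) = (57, r', out)
    \<and> r' 24 = of_int b * sqrt 2 \<and> r' 28 = of_int (grid_row_lo X0 Y0 b)
    \<and> r' 32 = of_int (grid_row_hi X1 Y1 b) \<and> (\<forall>j < 24. r' j = r j)"
proof -
  have abs_powr: "((z::real) * z) powr (1 / 2) = \<bar>z\<bar>" for z
    by (simp add: powr_half_sqrt)
  show ?thesis
    using assms(2-)
    by (simp add: run_prog_simps loop_regsD[OF assms(1)] abs_powr grid_row_lo_def grid_row_hi_def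
        ceiling_def max_def min_def)
qed

lemma run_emit:
  assumes "loop_regs m X0 X1 Y0 Y1 r" "r 24 = of_int b * sqrt 2" "r 28 = of_int a" "r 32 = of_int H" "a \<le> H"
  shows "\<exists>r'. run prog 12 (57, r, out) = (57, r', out @ [unscaled_coords m (a, b)])
    \<and> r' 28 = of_int (a + 1) \<and> r' 32 = r 32 \<and> (\<forall>j < 28. r' j = r j)"
  using assms(2-)
  by (simp add: run_prog_simps loop_regsD[OF assms(1)] unscaled_coords_def rt2_val_def rt2_conj_def
      Let_def)

lemma run_row_exit:
  assumes "r 4 = 1" "r 28 = of_int a" "r 32 = of_int H" "H < a"
  shows "run prog 3 (57, r, out) = (30, r(22 := r 22 + 1), out)"
  using assms by (simp add: run_prog_simps)

lemma run_row:
  assumes "loop_regs m X0 X1 Y0 Y1 r" "r 24 = of_int b * sqrt 2" "r 28 = of_int a" "r 32 = of_int H"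
  shows "\<exists>r'. run prog (12 * nat (H - a + 1) + 3) (57, r, out)
      = (30, r', out @ map (\<lambda>a. unscaled_coords m (a, b)) [a..H])
    \<and> r' 22 = r 22 + 1 \<and> (\<forall>j < 24. j \<noteq> 22 \<longrightarrow> r' j = r j)"
  using assms
proof (induction "nat (H - a + 1)" arbitrary: a r out)
  case 0
  then show ?case
    using run_row_exit[of r a H] loop_regsD(1)[OF "0.prems"(1)] by simp
next
  case (Suc n)
  then have "a \<le> H"
    by simp
  obtain r1 where r1: "run prog 12 (57, r, out) = (57, r1, out @ [unscaled_coords m (a, b)])"
    "r1 28 = of_int (a + 1)" "r1 32 = r 32" "\<forall>j < 28. r1 j = r j"
    using run_emit[OF Suc.prems \<open>a \<le> H\<close>] by blast
  have "n = nat (H - (a + 1) + 1)" "loop_regs m X0 X1 Y0 Y1 r1" "r1 24 = of_int b * sqrt 2"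
    "r1 32 = of_int H"
    using Suc r1 loop_regs_cong[of m X0 X1 Y0 Y1 r r1] by auto
  then obtain r' where r': "run prog (12 * n + 3) (57, r1, out @ [unscaled_coords m (a, b)])
      = (30, r', (out @ [unscaled_coords m (a, b)]) @ map (\<lambda>a. unscaled_coords m (a, b)) [a + 1..H])"
    "r' 22 = r1 22 + 1" "\<forall>j < 24. j \<noteq> 22 \<longrightarrow> r' j = r1 j"
    using Suc.hyps(1)[of "a + 1" r1 "out @ [unscaled_coords m (a, b)]"] r1(2) by blast
  have "run prog (12 * Suc n + 3) (57, r, out) = run prog (12 * n + 3) (run prog 12 (57, r, out))"
    using run_add[of prog 12 "12 * n + 3"] by simp
  moreover have "[a..H] = a # [a + 1..H]"
    using \<open>a \<le> H\<close> by (simp add: upto_rec1)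
  ultimately show ?case
    using r1 r' \<open>Suc n = nat (H - a + 1)\<close>[symmetric] by auto
qed

lemma run_rows:
  assumes "loop_regs m X0 X1 Y0 Y1 r" "r 22 = of_int b" "r 23 = of_int B"
  defines "L \<equiv> concat (map (grid_row X0 X1 Y0 Y1) [b..B])"
  shows "\<exists>r'. run prog (1 + 29 * nat (B - b + 1) + 12 * length L) (30, r, out)
    = (31, r', out @ map (unscaled_coords m) L)"
  using assms(1-3) unfolding L_def
proof (induction "nat (B - b + 1)" arbitrary: b r out)
  case 0
  then show ?case
    by (simp add: run_prog_simps)
next
  case (Suc n)
  then have "b \<le> B"
    by simp
  let ?row = "grid_row X0 X1 Y0 Y1 b" and ?rest = "concat (map (grid_row X0 X1 Y0 Y1) [b + 1..B])"
  obtain r1 where r1: "run prog 26 (30, r, out) = (57, r1, out)" "r1 24 = of_int b * sqrt 2"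
    "r1 28 = of_int (grid_row_lo X0 Y0 b)" "r1 32 = of_int (grid_row_hi X1 Y1 b)" "\<forall>j < 24. r1 j = r j"
    using run_row_bounds[OF Suc.prems \<open>b \<le> B\<close>] by blast
  obtain r2 where r2: "run prog (12 * length ?row + 3) (57, r1, out) = (30, r2, out @ map (unscaled_coords m) ?row)"
    "r2 22 = r1 22 + 1" "\<forall>j < 24. j \<noteq> 22 \<longrightarrow> r2 j = r1 j"
    using run_row[OF loop_regs_cong[OF Suc.prems(1)] r1(2-4), of out] r1(5)
    by (auto simp: grid_row_def o_def)
  have "n = nat (B - (b + 1) + 1)" "loop_regs m X0 X1 Y0 Y1 r2" "r2 22 = of_int (b + 1)" "r2 23 = of_int B"
    using Suc r1 r2 loop_regs_cong[of m X0 X1 Y0 Y1 r r2] by auto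
  then obtain r' where r': "run prog (1 + 29 * n + 12 * length ?rest) (30, r2, out @ map (unscaled_coords m) ?row)
    = (31, r', (out @ map (unscaled_coords m) ?row) @ map (unscaled_coords m) ?rest)"
    using Suc.hyps(1) by blast
  have rows: "[b..B] = b # [b + 1..B]"
    using \<open>b \<le> B\<close> by (simp add: upto_rec1)
  then have "1 + 29 * Suc n + 12 * length (concat (map (grid_row X0 X1 Y0 Y1) [b..B]))
    = 26 + ((12 * length ?row + 3) + (1 + 29 * n + 12 * length ?rest))"
    by simp
  then show ?case
    using rows r1(1) r2(1) r' \<open>Suc n = nat (B - b + 1)\<close>[symmetric] by (simp only: run_add) simp
qed

lemma run_prog:
  assumes "m = scale_factor x0 x1 y0 y1"
  defines "G \<equiv> grid_list (m * x0) (m * x1) (y0 / m) (y1 / m)"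
  shows "\<exists>r. run prog (31 + 29 * length (grid_rows (m * x0) (m * x1) (y0 / m) (y1 / m)) + 12 * length G)
      (init_state x0 x1 y0 y1) = (31, r, map (unscaled_coords m) G)"
proof -
  obtain r where r: "run prog 30 (init_state x0 x1 y0 y1) = (30, r, [])"
    "loop_regs m (m * x0) (m * x1) (y0 / m) (y1 / m) r"
    "r 22 = of_int \<lceil>(m * x0 - y1 / m) / (2 * sqrt 2)\<rceil>" "r 23 = of_int \<lfloor>(m * x1 - y0 / m) / (2 * sqrt 2)\<rfloor>"
    using run_prelude[OF assms(1)] by blast
  from run_rows[OF r(2-4), of "[]"] obtain r' where
    "run prog (1 + 29 * length (grid_rows (m * x0) (m * x1) (y0 / m) (y1 / m)) + 12 * length G) (30, r, [])
      = (31, r', map (unscaled_coords m) G)"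
    unfolding G_def grid_list_def grid_rows_def by auto
  then have "run prog (30 + (1 + 29 * length (grid_rows (m * x0) (m * x1) (y0 / m) (y1 / m)) + 12 * length G))
      (init_state x0 x1 y0 y1) = (31, r', map (unscaled_coords m) G)"
    by (simp only: run_add r(1))
  then show ?thesis
    by (intro exI[of _ r']) (simp add: add.assoc)
qed

lemma halted_prog_31: "halted prog (31, s)"
  by (simp add: halted_def prog_def)

theorem proposition5p27:
  "\<exists>(P :: instr list) (C :: nat).
     \<forall>x0 x1 y0 y1 :: real. x0 \<le> x1 \<longrightarrow> y0 \<le> y1 \<longrightarrow>
       (\<exists>n. halted P (run P n (init_state x0 x1 y0 y1)) \<and>
            (let out = snd (snd (run P n (init_state x0 x1 y0 y1))) in
               distinct out \<and>
               set out = (\<lambda>(a, b). (real_of_int a, real_of_int b)) ` grid_solutions x0 x1 y0 y1 \<and>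
               n \<le> C * (length out + 1)))"
proof (rule exI[of _ prog], rule exI[of _ 500], intro allI impI)
  fix x0 x1 y0 y1 :: real
  assume "x0 \<le> x1" "y0 \<le> y1"
  define m where "m = scale_factor x0 x1 y0 y1"
  define G where "G = grid_list (m * x0) (m * x1) (y0 / m) (y1 / m)"
  define n where "n = 31 + 29 * length (grid_rows (m * x0) (m * x1) (y0 / m) (y1 / m)) + 12 * length G"
  obtain r where "run prog n (init_state x0 x1 y0 y1) = (31, r, map (unscaled_coords m) G)"
    using run_prog[OF m_def] unfolding n_def G_def by blast
  moreover have "n \<le> 500 * (length (map (unscaled_coords m) G) + 1)"
    using length_scaled_grid_rows_le[OF \<open>x0 \<le> x1\<close> \<open>y0 \<le> y1\<close> m_def] unfolding n_def G_def by simp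
  ultimately show "\<exists>n. halted prog (run prog n (init_state x0 x1 y0 y1)) \<and>
      (let out = snd (snd (run prog n (init_state x0 x1 y0 y1))) in
        distinct out \<and> set out = (\<lambda>(a, b). (real_of_int a, real_of_int b)) ` grid_solutions x0 x1 y0 y1 \<and>
        n \<le> 500 * (length out + 1))"
    using scaled_grid_output[OF m_def] halted_prog_31 unfolding G_def by (intro exI[of _ n]) simp
qed

end
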